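(* Let $A$ be a meet-complemented lattice in which $\Box x$ and $\Diamond x$ exist for every $x\in A$. Suppose that for every $a\in A$ the infimum $\bigwedge\{\Box^n a: n\in\mathbb{N}\}$ exists in $A$ (where $\Box^0 a=a$). Then for every $a\in A$, the set $\{b\in A: b\le a \text{ and } b\vee\neg b=1\}$ has a maximum $Ba$, and $Ba=\bigwedge\{\Box^n a: n\in\mathbb{N}\}$.
   Context: A meet-complemented lattice is a lattice $(L,\le)$ (not necessarily distributive) such that for every $a\in L$ the element $\neg a=\max\{b\in L: a\wedge b\le c\ \text{for all } c\in L\}$ exists; it is bounded with bottom $0$ and top $1$. For $a\in L$, $\Box a=\max\{b\in L: a\vee\neg b=1\}$ and $\Diamond a=\min\{b\in L: \neg a\vee b=1\}$. $\mathbb{N}$ includes $0$. $Ba$ denotes the greatest Boolean element (element $b$ with $b\vee\neg b=1$) below $a$. *)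

theory Defs
  imports Main
begin

definition is_max :: "'a::order set \<Rightarrow> 'a \<Rightarrow> bool" where
  "is_max S m \<longleftrightarrow> m \<in> S \<and> (\<forall>x\<in>S. x \<le> m)"

definition is_min :: "'a::order set \<Rightarrow> 'a \<Rightarrow> bool" where
  "is_min S m \<longleftrightarrow> m \<in> S \<and> (\<forall>x\<in>S. m \<le> x)"

definition is_inf :: "'a::order set \<Rightarrow> 'a \<Rightarrow> bool" where
  "is_inf S m \<longleftrightarrow> (\<forall>x\<in>S. m \<le> x) \<and> (\<forall>y. (\<forall>x\<in>S. y \<le> x) \<longrightarrow> y \<le> m)"

definition meet_complemented :: "'a::bounded_lattice itself \<Rightarrow> bool" where
  "meet_complemented _ \<longleftrightarrow> (\<forall>a::'a. \<exists>m. is_max {b. \<forall>c. inf a b \<le> c} m)"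

definition mneg :: "'a::bounded_lattice \<Rightarrow> 'a" where
  "mneg a = (THE m. is_max {b. \<forall>c. inf a b \<le> c} m)"

definition mbox :: "'a::bounded_lattice \<Rightarrow> 'a" where
  "mbox a = (THE m. is_max {b. sup a (mneg b) = top} m)"

definition mdia :: "'a::bounded_lattice \<Rightarrow> 'a" where
  "mdia a = (THE m. is_min {b. sup (mneg a) b = top} m)"

end

theory Submission
  imports Defs
begin

text \<open>Every Boolean element below \<open>a\<close> stays below all iterates \<open>\<box>\<^sup>n a\<close>, since
  \<open>b \<le> x\<close> with \<open>b \<or> \<not>b = 1\<close> gives \<open>x \<or> \<not>b = 1\<close>, i.e. \<open>b \<le> \<box>x\<close>. Conversely let \<open>m\<close> be
  the infimum of the iterates. From \<open>\<box>\<^sup>n a \<or> \<not>\<box>\<^sup>n\<^sup>+\<^sup>1 a = 1\<close> and \<open>\<not>\<box>\<^sup>n\<^sup>+\<^sup>1 a \<le> \<not>m\<close>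
  we get \<open>\<not>m \<or> \<box>\<^sup>n a = 1\<close> for all \<open>n\<close>, so \<open>\<diamond>m \<le> \<box>\<^sup>n a\<close> for all \<open>n\<close> and hence \<open>\<diamond>m \<le> m\<close>;
  then \<open>1 = \<not>m \<or> \<diamond>m \<le> \<not>m \<or> m\<close>, so \<open>m\<close> is itself Boolean and is the largest
  Boolean element below \<open>a\<close>.\<close>

lemma is_max_unique: "is_max S m \<Longrightarrow> is_max S m' \<Longrightarrow> m = (m'::'a::order)"
  unfolding is_max_def by (meson order.antisym)

lemma is_min_unique: "is_min S m \<Longrightarrow> is_min S m' \<Longrightarrow> m = (m'::'a::order)"
  unfolding is_min_def by (meson order.antisym)

lemma is_max_The: "\<exists>m. is_max S m \<Longrightarrow> is_max S (THE m. is_max S (m::'a::order))"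
  by (metis theI is_max_unique)

lemma is_min_The: "\<exists>m. is_min S m \<Longrightarrow> is_min S (THE m. is_min S (m::'a::order))"
  by (metis theI is_min_unique)

lemma sup_eq_top_mono:
  fixes x y x' y' :: "'a::bounded_lattice"
  shows "sup x y = top \<Longrightarrow> x \<le> x' \<Longrightarrow> y \<le> y' \<Longrightarrow> sup x' y' = top"
  by (metis sup_mono top_unique)

lemma mneg_is_max:
  assumes "meet_complemented TYPE('a::bounded_lattice)"
  shows "is_max {b. \<forall>c. inf x b \<le> c} (mneg (x::'a))"
  using assms unfolding mneg_def meet_complemented_def by (intro is_max_The) blast

lemma inf_mneg_eq_bot:
  assumes "meet_complemented TYPE('a::bounded_lattice)"
  shows "inf x (mneg x) = (bot::'a)"
  using mneg_is_max[OF assms, of x] unfolding is_max_def by (metis bot_unique mem_Collect_eq)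

lemma le_mneg_iff:
  assumes "meet_complemented TYPE('a::bounded_lattice)"
  shows "b \<le> mneg x \<longleftrightarrow> inf x b = (bot::'a)"
proof
  assume "b \<le> mneg x"
  hence "inf x b \<le> inf x (mneg x)" by (rule inf_mono[OF order_refl])
  thus "inf x b = bot" by (simp add: inf_mneg_eq_bot[OF assms] bot_unique)
next
  assume "inf x b = bot"
  hence "\<forall>c. inf x b \<le> c" by simp
  thus "b \<le> mneg x" using mneg_is_max[OF assms, of x] unfolding is_max_def by simp
qed

lemma mneg_antimono:
  assumes "meet_complemented TYPE('a::bounded_lattice)" and "x \<le> y"
  shows "mneg y \<le> mneg (x::'a)"
proof -
  have "inf x (mneg y) \<le> inf y (mneg y)" using assms(2) by (rule inf_mono) simp
  thus ?thesis by (simp add: le_mneg_iff[OF assms(1)] inf_mneg_eq_bot[OF assms(1)] bot_unique)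
qed

lemma
  fixes x :: "'a::bounded_lattice"
  assumes "\<exists>m. is_max {b. sup x (mneg b) = top} m"
  shows sup_mneg_mbox: "sup x (mneg (mbox x)) = top"
    and le_mbox: "sup x (mneg b) = top \<Longrightarrow> b \<le> mbox x"
proof -
  have "is_max {b. sup x (mneg b) = top} (mbox x)"
    unfolding mbox_def by (rule is_max_The[OF assms])
  thus "sup x (mneg (mbox x)) = top" and "sup x (mneg b) = top \<Longrightarrow> b \<le> mbox x"
    unfolding is_max_def by auto
qed

lemma
  fixes x :: "'a::bounded_lattice"
  assumes "\<exists>m. is_min {b. sup (mneg x) b = top} m"
  shows sup_mneg_mdia: "sup (mneg x) (mdia x) = top"
    and mdia_le: "sup (mneg x) b = top \<Longrightarrow> mdia x \<le> b"
proof -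
  have "is_min {b. sup (mneg x) b = top} (mdia x)"
    unfolding mdia_def by (rule is_min_The[OF assms])
  thus "sup (mneg x) (mdia x) = top" and "sup (mneg x) b = top \<Longrightarrow> mdia x \<le> b"
    unfolding is_min_def by auto
qed

lemma boolean_le_mbox_iterates:
  fixes a b :: "'a::bounded_lattice"
  assumes box_ex: "\<forall>x::'a. \<exists>m. is_max {b. sup x (mneg b) = top} m"
    and "b \<le> a" and boolean: "sup b (mneg b) = top"
  shows "b \<le> (mbox ^^ n) a"
proof (induction n)
  case 0
  show ?case using \<open>b \<le> a\<close> by simp
next
  case (Suc n)
  have "sup ((mbox ^^ n) a) (mneg b) = top" using sup_eq_top_mono[OF boolean Suc order_refl] .
  thus ?case using le_mbox[OF box_ex[rule_format]] by simp
qed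

lemma sup_mneg_lower_bound_mbox_iterates:
  fixes a m :: "'a::bounded_lattice"
  assumes mc: "meet_complemented TYPE('a)"
    and box_ex: "\<forall>x::'a. \<exists>m. is_max {b. sup x (mneg b) = top} m"
    and lower: "\<And>n. m \<le> (mbox ^^ n) a"
  shows "sup (mneg m) ((mbox ^^ n) a) = top"
proof -
  have "sup ((mbox ^^ n) a) (mneg ((mbox ^^ Suc n) a)) = top"
    using sup_mneg_mbox[OF box_ex[rule_format]] by simp
  moreover have "mneg ((mbox ^^ Suc n) a) \<le> mneg m" using mneg_antimono[OF mc lower] .
  ultimately have "sup ((mbox ^^ n) a) (mneg m) = top" by (rule sup_eq_top_mono[OF _ order_refl])
  thus ?thesis by (simp only: sup_commute)
qed

lemma inf_mbox_iterates_boolean: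
  fixes a m :: "'a::bounded_lattice"
  assumes mc: "meet_complemented TYPE('a)"
    and box_ex: "\<forall>x::'a. \<exists>m. is_max {b. sup x (mneg b) = top} m"
    and dia_ex: "\<forall>x::'a. \<exists>m. is_min {b. sup (mneg x) b = top} m"
    and m: "is_inf {(mbox ^^ n) a | n. True} m"
  shows "sup m (mneg m) = top"
proof -
  have lower: "m \<le> (mbox ^^ n) a" for n using m unfolding is_inf_def by blast
  have "mdia m \<le> (mbox ^^ n) a" for n
    using mdia_le[OF dia_ex[rule_format]]
      sup_mneg_lower_bound_mbox_iterates[OF mc box_ex lower] by blast
  hence "mdia m \<le> m" using m unfolding is_inf_def by blast
  moreover have "sup (mneg m) (mdia m) = top" using sup_mneg_mdia[OF dia_ex[rule_format]] .
  ultimately have "sup (mneg m) m = top" by (rule sup_eq_top_mono[OF _ order_refl, rotated])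
  thus ?thesis by (simp only: sup_commute)
qed

theorem proposition12:
  assumes mc: "meet_complemented TYPE('a::bounded_lattice)"
    and box_ex: "\<forall>x::'a. \<exists>m. is_max {b. sup x (mneg b) = top} m"
    and dia_ex: "\<forall>x::'a. \<exists>m. is_min {b. sup (mneg x) b = top} m"
    and inf_ex: "\<forall>a::'a. \<exists>m. is_inf {(mbox ^^ n) a | n. True} m"
  shows "\<forall>a::'a. \<exists>Ba. is_max {b. b \<le> a \<and> sup b (mneg b) = top} Ba
                       \<and> is_inf {(mbox ^^ n) a | n. True} Ba"
proof
  fix a :: 'a
  obtain m where m: "is_inf {(mbox ^^ n) a | n. True} m" using inf_ex by blast
  have "(mbox ^^ 0) a \<in> {(mbox ^^ n) a | n. True}" by blast
  hence "m \<le> a" using m unfolding is_inf_def by simp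
  moreover have "sup m (mneg m) = top" using inf_mbox_iterates_boolean[OF mc box_ex dia_ex m] .
  moreover have "b \<le> m" if "b \<le> a" "sup b (mneg b) = top" for b
    using m boolean_le_mbox_iterates[OF box_ex that] unfolding is_inf_def by blast
  ultimately show "\<exists>Ba. is_max {b. b \<le> a \<and> sup b (mneg b) = top} Ba
                       \<and> is_inf {(mbox ^^ n) a | n. True} Ba"
    using m unfolding is_max_def by blast
qed

end
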